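(* Let $n\ge 2$ and let $\mathcal{A}(L_n)=\{(x,y)\in L_n\times L_n: y\le x\}\setminus\{(0,0)\}$, ordered componentwise. Then $\operatorname{Der}(L_n)$ with pointwise order is a lattice (with pointwise $\vee$ and $\wedge$), and the map $(x,y)\mapsto (d_x)^y$ is a lattice isomorphism from $\mathcal{A}(L_n)$ onto $\operatorname{Der}(L_n)$, where $(d_x)^y(1)=y$ and $(d_x)^y(z)=x\odot z$ for $z\ne 1$.
   Context: An MV-algebra is an algebra $(A,\oplus,{}^*,0)$ of type $(2,1,0)$ satisfying the usual axioms; $1=0^*$, $x\odot y=(x^*\oplus y^* )^*$, natural order $x\le y$ iff $x^*\oplus y=1$, $x\vee y=(x\odot y^* )\oplus y$, $x\wedge y=x\odot(x^*\oplus y)$. A $(\odot,\vee)$-derivation on $A$ is a map $d:A\to A$ with $d(x\odot y)=(d(x)\odot y)\vee(x\odot d(y))$ for all $x,y\in A$; $\operatorname{Der}(A)$ is the set of these, ordered by $d\preceq d'$ iff $d(x)\le d'(x)$ for all $x$. $L_n=\{0,\frac1{n-1},\dots,\frac{n-2}{n-1},1\}$ with $x\oplus y=\min\{1,x+y\}$, $x^*=1-x$, $x\odot y=\max\{0,x+y-1\}$. *)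

theory Defs
  imports Complex_Main "HOL-Library.FuncSet"
begin

definition Ln :: "nat \<Rightarrow> real set" where
  "Ln n = {real k / real (n - 1) | k. k \<le> n - 1}"

definition mv_oplus :: "real \<Rightarrow> real \<Rightarrow> real" where
  "mv_oplus x y = min 1 (x + y)"

definition mv_star :: "real \<Rightarrow> real" where
  "mv_star x = 1 - x"

definition mv_odot :: "real \<Rightarrow> real \<Rightarrow> real" where
  "mv_odot x y = mv_star (mv_oplus (mv_star x) (mv_star y))"

definition mv_le :: "real \<Rightarrow> real \<Rightarrow> bool" where
  "mv_le x y \<longleftrightarrow> mv_oplus (mv_star x) y = 1"

definition mv_sup :: "real \<Rightarrow> real \<Rightarrow> real" where
  "mv_sup x y = mv_oplus (mv_odot x (mv_star y)) y"

definition mv_inf :: "real \<Rightarrow> real \<Rightarrow> real" where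
  "mv_inf x y = mv_odot x (mv_oplus (mv_star x) y)"

definition Der :: "nat \<Rightarrow> (real \<Rightarrow> real) set" where
  "Der n = {d \<in> Ln n \<rightarrow>\<^sub>E Ln n.
     \<forall>x\<in>Ln n. \<forall>y\<in>Ln n. d (mv_odot x y) = mv_sup (mv_odot (d x) y) (mv_odot x (d y))}"

definition der_le :: "nat \<Rightarrow> (real \<Rightarrow> real) \<Rightarrow> (real \<Rightarrow> real) \<Rightarrow> bool" where
  "der_le n d d' \<longleftrightarrow> (\<forall>x\<in>Ln n. mv_le (d x) (d' x))"

definition der_sup :: "nat \<Rightarrow> (real \<Rightarrow> real) \<Rightarrow> (real \<Rightarrow> real) \<Rightarrow> (real \<Rightarrow> real)" where
  "der_sup n d d' = (\<lambda>x\<in>Ln n. mv_sup (d x) (d' x))"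

definition der_inf :: "nat \<Rightarrow> (real \<Rightarrow> real) \<Rightarrow> (real \<Rightarrow> real) \<Rightarrow> (real \<Rightarrow> real)" where
  "der_inf n d d' = (\<lambda>x\<in>Ln n. mv_inf (d x) (d' x))"

definition AL :: "nat \<Rightarrow> (real \<times> real) set" where
  "AL n = {(x, y). x \<in> Ln n \<and> y \<in> Ln n \<and> mv_le y x} - {(0, 0)}"

definition A_le :: "real \<times> real \<Rightarrow> real \<times> real \<Rightarrow> bool" where
  "A_le p q \<longleftrightarrow> mv_le (fst p) (fst q) \<and> mv_le (snd p) (snd q)"

definition dxy :: "nat \<Rightarrow> real \<Rightarrow> real \<Rightarrow> (real \<Rightarrow> real)" where
  "dxy n x y = (\<lambda>z\<in>Ln n. if z = 1 then y else mv_odot x z)"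

end

theory Submission imports Defs begin

text \<open>
  Write \<open>h = 1/(n-1)\<close> for the atom of \<open>L\<^sub>n\<close>. For a derivation \<open>d\<close>, the identity
  \<open>a \<odot> a\<^sup>* = 0\<close> forces \<open>d 0 = 0\<close> and then \<open>d a \<le> a\<close>. Since \<open>a \<odot> (1 - h) = a - h\<close>,
  a descending induction from the coatom \<open>1 - h\<close> shows \<open>d z = x \<odot> z\<close> for all
  \<open>z \<noteq> 1\<close>, where \<open>x = d (1 - h) + h\<close>; with \<open>y = d 1\<close> this gives \<open>d = (d\<^sub>x)\<^sup>y\<close>.
  Hence \<open>d \<mapsto> (d (1 - h) + h, d 1)\<close> inverts \<open>(x, y) \<mapsto> (d\<^sub>x)\<^sup>y\<close>, and order and
  lattice operations on both sides are read off at the two points \<open>1 - h\<close> and \<open>1\<close>.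
\<close>

lemma mv_odot_eq: "mv_odot x y = max 0 (x + y - 1)"
  by (simp add: mv_odot_def mv_oplus_def mv_star_def)

lemma mv_le_iff: "mv_le x y \<longleftrightarrow> x \<le> y"
  by (simp add: mv_le_def mv_oplus_def mv_star_def min_def)

lemma mv_sup_eq: "x \<le> 1 \<Longrightarrow> y \<le> 1 \<Longrightarrow> mv_sup x y = max x y"
  by (simp add: mv_sup_def mv_odot_def mv_oplus_def mv_star_def)

lemma mv_inf_eq: "0 \<le> x \<Longrightarrow> 0 \<le> y \<Longrightarrow> mv_inf x y = min x y"
  by (simp add: mv_inf_def mv_odot_def mv_oplus_def mv_star_def)

lemmas mv_simps = mv_odot_eq mv_sup_def mv_oplus_def mv_star_def max_def min_def

definition Ln_atom :: "nat \<Rightarrow> real" where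
  "Ln_atom n = 1 / real (n - 1)"

lemma Ln_atom_pos: "n \<ge> 2 \<Longrightarrow> Ln_atom n > 0"
  by (simp add: Ln_atom_def)

lemma mem_Ln_iff: "z \<in> Ln n \<longleftrightarrow> (\<exists>k\<le>n - 1. z = real k * Ln_atom n)"
  by (auto simp: Ln_def Ln_atom_def)

lemma Ln_bounds: "n \<ge> 2 \<Longrightarrow> z \<in> Ln n \<Longrightarrow> 0 \<le> z \<and> z \<le> 1"
  by (auto simp: mem_Ln_iff Ln_atom_def divide_le_eq)

lemma zero_in_Ln: "0 \<in> Ln n"
  by (auto simp: mem_Ln_iff intro: exI[of _ 0])

lemma one_in_Ln: "n \<ge> 2 \<Longrightarrow> 1 \<in> Ln n"
  by (auto simp: mem_Ln_iff Ln_atom_def intro!: exI[of _ "n - 1"])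

lemma one_minus_in_Ln:
  assumes "n \<ge> 2" "z \<in> Ln n"
  shows "1 - z \<in> Ln n"
proof -
  obtain k where k: "k \<le> n - 1" "z = real k * Ln_atom n"
    using assms by (auto simp: mem_Ln_iff)
  then have "1 - z = real (n - 1 - k) * Ln_atom n"
    using assms by (simp add: Ln_atom_def of_nat_diff field_simps)
  then show ?thesis
    unfolding mem_Ln_iff by (intro exI[of _ "n - 1 - k"]) simp
qed

lemma coatom_in_Ln: "n \<ge> 2 \<Longrightarrow> 1 - Ln_atom n \<in> Ln n"
  by (rule one_minus_in_Ln) (auto simp: mem_Ln_iff intro!: exI[of _ 1])

lemma mv_odot_in_Ln:
  assumes n: "n \<ge> 2" and "x \<in> Ln n" "y \<in> Ln n"
  shows "mv_odot x y \<in> Ln n"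
proof -
  obtain k l where k: "k \<le> n - 1" "x = real k * Ln_atom n"
    and l: "l \<le> n - 1" "y = real l * Ln_atom n"
    using assms by (auto simp: mem_Ln_iff)
  show ?thesis
  proof (cases "k + l \<le> n - 1")
    case True
    have "x + y - 1 = (real (k + l) - real (n - 1)) * Ln_atom n"
      using k l n by (simp add: Ln_atom_def field_simps)
    also have "\<dots> \<le> 0"
      using True Ln_atom_pos[OF n] by (simp add: mult_nonpos_nonneg)
    finally show ?thesis
      using zero_in_Ln by (simp add: mv_odot_eq)
  next
    case False
    then have "x + y - 1 = real (k + l - (n - 1)) * Ln_atom n"
      using k l n by (simp add: Ln_atom_def of_nat_diff field_simps)
    moreover have "k + l - (n - 1) \<le> n - 1"
      using k l by simp
    ultimately show ?thesis
      by (auto simp: mem_Ln_iff mv_odot_eq max_def)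
  qed
qed

lemma Ln_nonzero_ge_atom:
  assumes "n \<ge> 2" "z \<in> Ln n" "z \<noteq> 0"
  shows "Ln_atom n \<le> z"
proof -
  obtain k where k: "z = real k * Ln_atom n"
    using assms by (auto simp: mem_Ln_iff)
  with assms have "k \<ge> 1"
    by (cases k) auto
  with k show ?thesis
    using Ln_atom_pos[OF assms(1)] by simp
qed

lemma Ln_below_one:
  assumes "n \<ge> 2" "z \<in> Ln n" "z \<noteq> 1"
  obtains k where "k \<le> n - 2" "z = real k * Ln_atom n"
proof -
  obtain k where k: "k \<le> n - 1" "z = real k * Ln_atom n"
    using assms by (auto simp: mem_Ln_iff)
  moreover have "k \<noteq> n - 1"
    using assms k by (auto simp: Ln_atom_def)
  ultimately show ?thesis
    using that[of k] by simp
qed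

lemma Ln_add_atom:
  assumes "n \<ge> 2" "z \<in> Ln n" "z \<noteq> 1"
  shows "z + Ln_atom n \<in> Ln n"
proof -
  obtain k where "k \<le> n - 2" "z = real k * Ln_atom n"
    using Ln_below_one[OF assms] .
  with assms(1) show ?thesis
    unfolding mem_Ln_iff by (intro exI[of _ "Suc k"]) (auto simp: algebra_simps)
qed

lemma mem_AL_iff:
  "n \<ge> 2 \<Longrightarrow> (x, y) \<in> AL n \<longleftrightarrow> x \<in> Ln n \<and> y \<in> Ln n \<and> y \<le> x \<and> x \<noteq> 0"
  by (auto simp: AL_def mv_le_iff dest: Ln_bounds)

lemma AL_bounds:
  assumes "n \<ge> 2" "(x, y) \<in> AL n"
  shows "0 \<le> y" "y \<le> x" "x \<le> 1"
  using assms by (auto simp: mem_AL_iff dest: Ln_bounds)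

lemma dxy_apply: "z \<in> Ln n \<Longrightarrow> dxy n x y z = (if z = 1 then y else max 0 (x + z - 1))"
  by (simp add: dxy_def mv_odot_eq)

lemma dxy_one: "n \<ge> 2 \<Longrightarrow> dxy n x y 1 = y"
  by (simp add: dxy_apply one_in_Ln)

lemma dxy_coatom:
  assumes "n \<ge> 2" "Ln_atom n \<le> x"
  shows "dxy n x y (1 - Ln_atom n) = x - Ln_atom n"
  using assms Ln_atom_pos[OF assms(1)] by (simp add: dxy_apply coatom_in_Ln)

lemma dxy_in_Der:
  assumes n: "n \<ge> 2" and x: "x \<in> Ln n" and y: "y \<in> Ln n" and "y \<le> x"
  shows "dxy n x y \<in> Der n"
  unfolding Der_def
proof (intro CollectI conjI ballI)
  show "dxy n x y \<in> Ln n \<rightarrow>\<^sub>E Ln n"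
    using y mv_odot_in_Ln[OF n x] by (auto simp: dxy_def)
next
  fix a b assume a: "a \<in> Ln n" and b: "b \<in> Ln n"
  note bounds = Ln_bounds[OF n x] Ln_bounds[OF n y] Ln_bounds[OF n a] Ln_bounds[OF n b]
  have "mv_odot a b \<noteq> 1" if "a \<noteq> 1 \<or> b \<noteq> 1"
    using bounds that by (auto simp: mv_odot_eq max_def)
  then show "dxy n x y (mv_odot a b) = mv_sup (mv_odot (dxy n x y a) b) (mv_odot a (dxy n x y b))"
    using bounds \<open>y \<le> x\<close> a b mv_odot_in_Ln[OF n a b]
    by (cases "a = 1"; cases "b = 1") (auto simp: dxy_apply mv_simps)
qed

subsection \<open>Every derivation is some \<open>(d\<^sub>x)\<^sup>y\<close>\<close>

lemma Der_apply:
  "d \<in> Der n \<Longrightarrow> a \<in> Ln n \<Longrightarrow> b \<in> Ln n \<Longrightarrow> d (mv_odot a b) = mv_sup (mv_odot (d a) b) (mv_odot a (d b))"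
  by (simp add: Der_def)

lemma Der_in_Ln: "d \<in> Der n \<Longrightarrow> a \<in> Ln n \<Longrightarrow> d a \<in> Ln n"
  by (auto simp: Der_def)

lemma Der_zero:
  assumes "n \<ge> 2" "d \<in> Der n"
  shows "d 0 = 0"
  using Der_apply[OF assms(2) zero_in_Ln zero_in_Ln] Ln_bounds[OF assms(1) Der_in_Ln[OF assms(2) zero_in_Ln]]
  by (simp add: mv_simps split: if_splits)

lemma Der_le:
  assumes n: "n \<ge> 2" and d: "d \<in> Der n" and a: "a \<in> Ln n"
  shows "d a \<le> a"
proof -
  have a': "1 - a \<in> Ln n"
    using one_minus_in_Ln[OF n a] .
  have "0 = mv_sup (mv_odot (d a) (1 - a)) (mv_odot a (d (1 - a)))"
    using Der_apply[OF d a a'] Der_zero[OF n d] by (simp add: mv_odot_eq)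
  then show ?thesis
    using Ln_bounds[OF n Der_in_Ln[OF d a]] Ln_bounds[OF n Der_in_Ln[OF d a']] Ln_bounds[OF n a]
    by (simp add: mv_simps split: if_splits)
qed

text \<open>The induction runs downwards from the coatom \<open>1 - h\<close>, using \<open>(k + 1) h \<odot> (1 - h) = k h\<close>.\<close>

lemma Der_below_one:
  assumes n: "n \<ge> 2" and d: "d \<in> Der n" and "k \<le> n - 2"
  shows "d (real k * Ln_atom n) = max 0 (real k * Ln_atom n + d (1 - Ln_atom n) + Ln_atom n - 1)"
  using \<open>k \<le> n - 2\<close>
proof (induction k rule: inc_induct)
  case base
  have "real (n - 2) * Ln_atom n = 1 - Ln_atom n"
    using n by (simp add: Ln_atom_def of_nat_diff field_simps)
  then show ?case
    using Der_le[OF n d coatom_in_Ln[OF n]] Ln_bounds[OF n Der_in_Ln[OF d coatom_in_Ln[OF n]]]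
    by simp
next
  case (step k)
  let ?h = "Ln_atom n"
  have h: "?h > 0" "1 - ?h \<in> Ln n"
    using Ln_atom_pos[OF n] coatom_in_Ln[OF n] .
  have a: "real (Suc k) * ?h \<in> Ln n"
    unfolding mem_Ln_iff using step by (intro exI[of _ "Suc k"]) auto
  have "mv_odot (real (Suc k) * ?h) (1 - ?h) = real k * ?h"
    using h by (simp add: mv_odot_eq algebra_simps max_def)
  then have "d (real k * ?h) = mv_sup (mv_odot (d (real (Suc k) * ?h)) (1 - ?h)) (mv_odot (real (Suc k) * ?h) (d (1 - ?h)))"
    using Der_apply[OF d a h(2)] by simp
  also have "\<dots> = max 0 (real k * ?h + d (1 - ?h) + ?h - 1)"
    using step.IH Ln_bounds[OF n Der_in_Ln[OF d a]] Ln_bounds[OF n a] h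
      Ln_bounds[OF n Der_in_Ln[OF d h(2)]] Der_le[OF n d h(2)]
    by (simp add: mv_simps algebra_simps)
  finally show ?case .
qed

lemma Der_one_le:
  assumes n: "n \<ge> 2" and d: "d \<in> Der n"
  shows "d 1 \<le> d (1 - Ln_atom n) + Ln_atom n"
proof -
  let ?h = "Ln_atom n"
  have c: "1 - ?h \<in> Ln n"
    using coatom_in_Ln[OF n] .
  have "mv_odot 1 (1 - ?h) = 1 - ?h"
    using Ln_bounds[OF n c] by (simp add: mv_odot_eq)
  then have "d (1 - ?h) = mv_sup (mv_odot (d 1) (1 - ?h)) (mv_odot 1 (d (1 - ?h)))"
    using Der_apply[OF d one_in_Ln[OF n] c] by simp
  then show ?thesis
    using Ln_bounds[OF n Der_in_Ln[OF d one_in_Ln[OF n]]] Ln_bounds[OF n Der_in_Ln[OF d c]]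
      Der_le[OF n d c] Ln_atom_pos[OF n]
    by (simp add: mv_simps split: if_splits)
qed

lemma Der_eq_dxy:
  assumes n: "n \<ge> 2" and d: "d \<in> Der n"
  shows "(d (1 - Ln_atom n) + Ln_atom n, d 1) \<in> AL n"
    and "d = dxy n (d (1 - Ln_atom n) + Ln_atom n) (d 1)"
proof -
  let ?h = "Ln_atom n"
  have c: "1 - ?h \<in> Ln n" and h: "?h > 0"
    using coatom_in_Ln[OF n] Ln_atom_pos[OF n] .
  have "d (1 - ?h) \<noteq> 1"
    using Der_le[OF n d c] h by auto
  then have "d (1 - ?h) + ?h \<in> Ln n"
    using Ln_add_atom[OF n Der_in_Ln[OF d c]] by simp
  moreover have "d (1 - ?h) + ?h \<noteq> 0"
    using h Ln_bounds[OF n Der_in_Ln[OF d c]] by linarith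
  ultimately show "(d (1 - ?h) + ?h, d 1) \<in> AL n"
    using Der_in_Ln[OF d one_in_Ln[OF n]] Der_one_le[OF n d] by (simp add: mem_AL_iff[OF n])
  show "d = dxy n (d (1 - ?h) + ?h) (d 1)"
  proof
    fix z
    show "d z = dxy n (d (1 - ?h) + ?h) (d 1) z"
    proof (cases "z \<in> Ln n \<and> z \<noteq> 1")
      case True
      then obtain k where "k \<le> n - 2" "z = real k * ?h"
        using Ln_below_one[OF n] by blast
      then show ?thesis
        using Der_below_one[OF n d] True by (simp add: dxy_apply algebra_simps)
    next
      case False
      then show ?thesis
        using d one_in_Ln[OF n] by (auto simp: dxy_def Der_def PiE_def extensional_def)
    qed
  qed
qed

lemma bij_betw_dxy_Der:
  assumes n: "n \<ge> 2"
  shows "bij_betw (\<lambda>(x, y). dxy n x y) (AL n) (Der n)"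
proof (rule bij_betw_byWitness[where f' = "\<lambda>d. (d (1 - Ln_atom n) + Ln_atom n, d 1)"])
  show "\<forall>p\<in>AL n. (\<lambda>d. (d (1 - Ln_atom n) + Ln_atom n, d 1)) ((\<lambda>(x, y). dxy n x y) p) = p"
    using n by (auto simp: mem_AL_iff dxy_one dxy_coatom Ln_nonzero_ge_atom)
  show "\<forall>d\<in>Der n. (\<lambda>(x, y). dxy n x y) (d (1 - Ln_atom n) + Ln_atom n, d 1) = d"
    using Der_eq_dxy(2)[OF n] by auto
  show "(\<lambda>(x, y). dxy n x y) ` AL n \<subseteq> Der n"
    using n by (auto simp: mem_AL_iff intro: dxy_in_Der)
  show "(\<lambda>d. (d (1 - Ln_atom n) + Ln_atom n, d 1)) ` Der n \<subseteq> AL n"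
    using Der_eq_dxy(1)[OF n] by auto
qed

lemma A_le_iff_der_le:
  assumes n: "n \<ge> 2" and p: "(x1, y1) \<in> AL n" and q: "(x2, y2) \<in> AL n"
  shows "A_le (x1, y1) (x2, y2) \<longleftrightarrow> der_le n (dxy n x1 y1) (dxy n x2 y2)"
proof
  assume "A_le (x1, y1) (x2, y2)"
  then show "der_le n (dxy n x1 y1) (dxy n x2 y2)"
    by (auto simp: A_le_def der_le_def mv_le_iff dxy_apply)
next
  assume "der_le n (dxy n x1 y1) (dxy n x2 y2)"
  then have "dxy n x1 y1 1 \<le> dxy n x2 y2 1"
    and "dxy n x1 y1 (1 - Ln_atom n) \<le> dxy n x2 y2 (1 - Ln_atom n)"
    using one_in_Ln[OF n] coatom_in_Ln[OF n] by (auto simp: der_le_def mv_le_iff)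
  then show "A_le (x1, y1) (x2, y2)"
    using p q n by (simp add: A_le_def mv_le_iff mem_AL_iff dxy_one dxy_coatom Ln_nonzero_ge_atom)
qed

lemma dxy_sup_inf:
  assumes n: "n \<ge> 2" and p: "(x1, y1) \<in> AL n" and q: "(x2, y2) \<in> AL n"
  shows "dxy n (mv_sup x1 x2) (mv_sup y1 y2) = der_sup n (dxy n x1 y1) (dxy n x2 y2)"
    and "dxy n (mv_inf x1 x2) (mv_inf y1 y2) = der_inf n (dxy n x1 y1) (dxy n x2 y2)"
proof -
  note bounds = AL_bounds[OF n p] AL_bounds[OF n q]
  show "dxy n (mv_sup x1 x2) (mv_sup y1 y2) = der_sup n (dxy n x1 y1) (dxy n x2 y2)"
  proof
    fix z
    show "dxy n (mv_sup x1 x2) (mv_sup y1 y2) z = der_sup n (dxy n x1 y1) (dxy n x2 y2) z"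
      using bounds Ln_bounds[OF n, of z]
      by (cases "z \<in> Ln n") (auto simp: der_sup_def dxy_def mv_odot_eq mv_sup_eq max_def)
  qed
  show "dxy n (mv_inf x1 x2) (mv_inf y1 y2) = der_inf n (dxy n x1 y1) (dxy n x2 y2)"
  proof
    fix z
    show "dxy n (mv_inf x1 x2) (mv_inf y1 y2) z = der_inf n (dxy n x1 y1) (dxy n x2 y2) z"
      using bounds Ln_bounds[OF n, of z]
      by (cases "z \<in> Ln n") (auto simp: der_inf_def dxy_def mv_odot_eq mv_inf_eq max_def min_def)
  qed
qed

lemma Der_closed_sup_inf:
  assumes n: "n \<ge> 2" and "d \<in> Der n" "d' \<in> Der n"
  shows "der_sup n d d' \<in> Der n \<and> der_inf n d d' \<in> Der n"
proof -
  obtain x1 y1 x2 y2 where p: "(x1, y1) \<in> AL n" "d = dxy n x1 y1"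
    and q: "(x2, y2) \<in> AL n" "d' = dxy n x2 y2"
    using assms Der_eq_dxy[OF n] by metis
  note bounds = AL_bounds[OF n p(1)] AL_bounds[OF n q(1)]
  have "(max x1 x2, max y1 y2) \<in> AL n" "(min x1 x2, min y1 y2) \<in> AL n"
    using p(1) q(1) bounds by (auto simp: mem_AL_iff[OF n] max_def min_def)
  then have "dxy n (max x1 x2) (max y1 y2) \<in> Der n" "dxy n (min x1 x2) (min y1 y2) \<in> Der n"
    by (auto simp: mem_AL_iff[OF n] intro: dxy_in_Der[OF n])
  then show ?thesis
    using dxy_sup_inf[OF n p(1) q(1)] bounds p(2) q(2) by (simp add: mv_sup_eq mv_inf_eq)
qed

theorem theorem5p6:
  fixes n :: nat
  assumes "n \<ge> 2"
  shows "(\<forall>d\<in>Der n. \<forall>d'\<in>Der n. der_sup n d d' \<in> Der n \<and> der_inf n d d' \<in> Der n)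
    \<and> bij_betw (\<lambda>(x, y). dxy n x y) (AL n) (Der n)
    \<and> (\<forall>p\<in>AL n. \<forall>q\<in>AL n.
          A_le p q \<longleftrightarrow> der_le n (dxy n (fst p) (snd p)) (dxy n (fst q) (snd q)))
    \<and> (\<forall>p\<in>AL n. \<forall>q\<in>AL n.
          dxy n (mv_sup (fst p) (fst q)) (mv_sup (snd p) (snd q))
            = der_sup n (dxy n (fst p) (snd p)) (dxy n (fst q) (snd q))
        \<and> dxy n (mv_inf (fst p) (fst q)) (mv_inf (snd p) (snd q))
            = der_inf n (dxy n (fst p) (snd p)) (dxy n (fst q) (snd q)))"
  using Der_closed_sup_inf[OF assms] bij_betw_dxy_Der[OF assms]
    A_le_iff_der_le[OF assms] dxy_sup_inf[OF assms]
  by auto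

end
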